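(* The polyhedron $$\mathcal{P}^{\text{odd-cover-dir}}:=\Big\{x\in\mathbb{R}^{E}_+ : \sum_{e\in P}x_e\ge 1 \text{ for every } s\rightarrow t \text{ odd-path } P \text{ in } D\Big\}$$ is not necessarily half-integral for directed acyclic graphs $D=(V,E)$ with distinct nodes $s,t\in V$. That is, there exist a DAG $D$ and nodes $s,t$ for which $\mathcal{P}^{\text{odd-cover-dir}}$ has an extreme point with some coordinate that is not an integer multiple of $1/2$.
   Context: Paths are simple directed paths. An odd-path is a path with an odd number of edges. A polyhedron is half-integral if every coordinate of each of its extreme points is an integer multiple of $1/2$. *)

theory Defs
  imports Complex_Main
begin

definition digraph :: "'a set \<Rightarrow> ('a \<times> 'a) set \<Rightarrow> bool" where
  "digraph V E \<longleftrightarrow> finite V \<and> E \<subseteq> V \<times> V"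

definition acyclic_digraph :: "'a set \<Rightarrow> ('a \<times> 'a) set \<Rightarrow> bool" where
  "acyclic_digraph V E \<longleftrightarrow> digraph V E \<and> (\<forall>v. (v, v) \<notin> E\<^sup>+)"

fun path_arcs :: "'a list \<Rightarrow> ('a \<times> 'a) list" where
  "path_arcs (u # v # vs) = (u, v) # path_arcs (v # vs)"
| "path_arcs _ = []"

definition st_path :: "('a \<times> 'a) set \<Rightarrow> 'a \<Rightarrow> 'a \<Rightarrow> 'a list \<Rightarrow> bool" where
  "st_path E s t p \<longleftrightarrow> p \<noteq> [] \<and> hd p = s \<and> last p = t \<and> distinct p
     \<and> set (path_arcs p) \<subseteq> E"

definition odd_st_path :: "('a \<times> 'a) set \<Rightarrow> 'a \<Rightarrow> 'a \<Rightarrow> 'a list \<Rightarrow> bool" where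
  "odd_st_path E s t p \<longleftrightarrow> st_path E s t p \<and> odd (length (path_arcs p))"

text \<open>The polyhedron P^{odd-cover-dir} in R^E, with vectors represented as functions
  that vanish outside E.\<close>
definition odd_cover_dir :: "('a \<times> 'a) set \<Rightarrow> 'a \<Rightarrow> 'a \<Rightarrow> (('a \<times> 'a) \<Rightarrow> real) set" where
  "odd_cover_dir E s t = {x. (\<forall>e. e \<notin> E \<longrightarrow> x e = 0) \<and> (\<forall>e\<in>E. x e \<ge> 0)
     \<and> (\<forall>p. odd_st_path E s t p \<longrightarrow> (\<Sum>e\<in>set (path_arcs p). x e) \<ge> 1)}"

definition extreme_pt :: "('b \<Rightarrow> real) \<Rightarrow> ('b \<Rightarrow> real) set \<Rightarrow> bool" where
  "extreme_pt x S \<longleftrightarrow> x \<in> S \<and>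
     \<not> (\<exists>y\<in>S. \<exists>z\<in>S. \<exists>u::real. 0 < u \<and> u < 1 \<and> y \<noteq> x \<and> z \<noteq> x
            \<and> x = (\<lambda>e. u * y e + (1 - u) * z e))"

definition half_integral_val :: "real \<Rightarrow> bool" where
  "half_integral_val r \<longleftrightarrow> (\<exists>k::int. r = of_int k / 2)"

end

theory Submission
  imports Defs
begin

text \<open>On the DAG with arcs 01, 02, 12, 23, 24, 25, 34, 36, 45, 46, 56 from s = 0 to t = 6, put
  1/3 on 02, 24, 46 and 2/3 on 23, 56. This point covers all six odd 0-6 paths, and its
  zero coordinates together with the five tight paths 012346, 012456, 0236, 0246, 0256
  form a linear system with a unique solution; hence it is a vertex of the polyhedron,
  and 1/3 is not a multiple of 1/2.\<close>

lemma convex_comb_eq_lower_bound: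
  fixes a b c u :: real
  assumes "c \<le> a" "c \<le> b" "u * a + (1 - u) * b = c" "0 < u" "u < 1"
  shows "a = c"
proof -
  have "u * (a - c) \<ge> 0" "(1 - u) * (b - c) \<ge> 0"
    using assms by simp_all
  moreover have "u * (a - c) + (1 - u) * (b - c) = 0"
    using assms(3) by (simp add: algebra_simps)
  ultimately have "u * (a - c) = 0" by linarith
  then show ?thesis using assms(4) by simp
qed

lemma extreme_pt_odd_cover_dirI:
  assumes x: "x \<in> odd_cover_dir E s t"
    and unique: "\<And>y. y \<in> odd_cover_dir E s t \<Longrightarrow>
        (\<forall>e\<in>E. x e = 0 \<longrightarrow> y e = 0) \<Longrightarrow>
        (\<forall>p. odd_st_path E s t p \<and> sum x (set (path_arcs p)) = 1
               \<longrightarrow> sum y (set (path_arcs p)) = 1) \<Longrightarrow> y = x"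
  shows "extreme_pt x (odd_cover_dir E s t)"
  unfolding extreme_pt_def
proof (intro conjI x notI)
  assume "\<exists>y\<in>odd_cover_dir E s t. \<exists>z\<in>odd_cover_dir E s t. \<exists>u::real. 0 < u \<and> u < 1 \<and>
            y \<noteq> x \<and> z \<noteq> x \<and> x = (\<lambda>e. u * y e + (1 - u) * z e)"
  then obtain y z u where y: "y \<in> odd_cover_dir E s t" and z: "z \<in> odd_cover_dir E s t"
    and u: "0 < u" "u < 1" and "y \<noteq> x" and x_eq: "x = (\<lambda>e. u * y e + (1 - u) * z e)"
    by blast
  have "\<forall>e\<in>E. x e = 0 \<longrightarrow> y e = 0"
  proof (intro ballI impI)
    fix e assume "e \<in> E" "x e = 0"
    with y z x_eq u show "y e = 0"
      using convex_comb_eq_lower_bound[of 0 "y e" "z e" u] by (auto simp: odd_cover_dir_def)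
  qed
  moreover have "\<forall>p. odd_st_path E s t p \<and> sum x (set (path_arcs p)) = 1
                   \<longrightarrow> sum y (set (path_arcs p)) = 1"
  proof (intro allI impI, elim conjE)
    fix p assume p: "odd_st_path E s t p" and tight: "sum x (set (path_arcs p)) = 1"
    let ?A = "set (path_arcs p)"
    have "u * sum y ?A + (1 - u) * sum z ?A = 1"
      using tight by (simp add: x_eq sum.distrib sum_distrib_left)
    with y z p u show "sum y ?A = 1"
      using convex_comb_eq_lower_bound[of 1 "sum y ?A" "sum z ?A" u]
      by (auto simp: odd_cover_dir_def)
  qed
  ultimately have "y = x" using unique y by blast
  with \<open>y \<noteq> x\<close> show False ..
qed

lemma acyclic_digraph_if_arcs_increasing:
  fixes E :: "('a::order \<times> 'a) set"
  assumes "finite V" "E \<subseteq> V \<times> V" "\<And>a b. (a, b) \<in> E \<Longrightarrow> a < b"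
  shows "acyclic_digraph V E"
proof -
  have "(a, b) \<in> E\<^sup>+ \<Longrightarrow> a < b" for a b
    by (induct rule: trancl_induct) (auto dest: assms(3) intro: less_trans)
  with assms(1,2) show ?thesis
    unfolding acyclic_digraph_def digraph_def by blast
qed

lemma not_half_integral_one_third: "\<not> half_integral_val (1/3)"
proof
  assume "half_integral_val (1/3)"
  then obtain k :: int where "1/3 = (of_int k / 2 :: real)"
    by (auto simp: half_integral_val_def)
  then have "(of_int (3 * k) :: real) = of_int 2" by simp
  then have "3 * k = 2" by (simp only: of_int_eq_iff)
  then show False by presburger
qed

definition example_arcs :: "(nat \<times> nat) set" where
  "example_arcs = {(0,1),(0,2),(1,2),(2,3),(2,4),(2,5),(3,4),(3,6),(4,5),(4,6),(5,6)}"

definition paths_to_sink :: "nat \<Rightarrow> nat list set" where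
  "paths_to_sink v = (if v = 6 then {[6]} else if v = 5 then {[5,6]}
     else if v = 4 then {[4,5,6],[4,6]}
     else if v = 3 then {[3,4,5,6],[3,4,6],[3,6]}
     else if v = 2 then {[2,3,4,5,6],[2,3,4,6],[2,3,6],[2,4,5,6],[2,4,6],[2,5,6]}
     else if v = 1 then {[1,2,3,4,5,6],[1,2,3,4,6],[1,2,3,6],[1,2,4,5,6],[1,2,4,6],[1,2,5,6]}
     else if v = 0 then {[0,1,2,3,4,5,6],[0,1,2,3,4,6],[0,1,2,3,6],[0,1,2,4,5,6],[0,1,2,4,6],
                         [0,1,2,5,6],[0,2,3,4,5,6],[0,2,3,4,6],[0,2,3,6],[0,2,4,5,6],[0,2,4,6],
                         [0,2,5,6]}
     else {})"

lemma paths_to_sink_Cons: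
  "(v, w) \<in> example_arcs \<Longrightarrow> p \<in> paths_to_sink w \<Longrightarrow> v # p \<in> paths_to_sink v"
  unfolding example_arcs_def
  by (elim insertE emptyE; simp add: paths_to_sink_def; elim disjE; simp)

lemma walk_in_paths_to_sink:
  "set (path_arcs (v # vs)) \<subseteq> example_arcs \<Longrightarrow> last (v # vs) = 6
     \<Longrightarrow> v # vs \<in> paths_to_sink v"
proof (induction vs arbitrary: v)
  case Nil
  then show ?case by (simp add: paths_to_sink_def)
next
  case (Cons w ws)
  then have "(v, w) \<in> example_arcs" "w # ws \<in> paths_to_sink w" by auto
  then show ?case by (rule paths_to_sink_Cons)
qed

lemma example_odd_paths:
  assumes "odd_st_path example_arcs 0 6 p"
  shows "p \<in> {[0,1,2,3,4,6], [0,1,2,4,5,6], [0,2,3,4,5,6], [0,2,3,6], [0,2,4,6], [0,2,5,6]}"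
proof -
  from assms obtain vs where p: "p = 0 # vs" and "last p = 6"
    and "set (path_arcs p) \<subseteq> example_arcs"
    by (cases p) (auto simp: odd_st_path_def st_path_def)
  then have "p \<in> paths_to_sink 0" using walk_in_paths_to_sink by simp
  with assms show ?thesis
    by (simp add: paths_to_sink_def odd_st_path_def) (elim disjE; simp)
qed

definition example_point :: "nat \<times> nat \<Rightarrow> real" where
  "example_point e = (if e \<in> {(0,2), (2,4), (4,6)} then 1/3
                      else if e \<in> {(2,3), (5,6)} then 2/3 else 0)"

lemma example_point_in_odd_cover_dir: "example_point \<in> odd_cover_dir example_arcs 0 6"
  unfolding odd_cover_dir_def
proof (intro CollectI conjI allI ballI impI)
  fix e assume "e \<notin> example_arcs"
  then show "example_point e = 0" by (auto simp: example_point_def example_arcs_def)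
next
  fix e show "example_point e \<ge> 0" by (simp add: example_point_def)
next
  fix p assume "odd_st_path example_arcs 0 6 p"
  then show "(\<Sum>e\<in>set (path_arcs p). example_point e) \<ge> 1"
    by (auto dest!: example_odd_paths simp: example_point_def)
qed

lemma example_tight_paths:
  "odd_st_path example_arcs 0 6 [0,1,2,3,4,6]" "odd_st_path example_arcs 0 6 [0,1,2,4,5,6]"
  "odd_st_path example_arcs 0 6 [0,2,3,6]" "odd_st_path example_arcs 0 6 [0,2,4,6]"
  "odd_st_path example_arcs 0 6 [0,2,5,6]"
  by (auto simp: odd_st_path_def st_path_def example_arcs_def)

lemma extreme_pt_example_point:
  "extreme_pt example_point (odd_cover_dir example_arcs 0 6)"
proof (rule extreme_pt_odd_cover_dirI[OF example_point_in_odd_cover_dir])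
  fix y
  assume y: "y \<in> odd_cover_dir example_arcs 0 6"
    and zero: "\<forall>e\<in>example_arcs. example_point e = 0 \<longrightarrow> y e = 0"
    and tight: "\<forall>p. odd_st_path example_arcs 0 6 p \<and> sum example_point (set (path_arcs p)) = 1
                  \<longrightarrow> sum y (set (path_arcs p)) = 1"
  have zeros: "y (0,1) = 0" "y (1,2) = 0" "y (2,5) = 0" "y (3,4) = 0" "y (3,6) = 0"
      "y (4,5) = 0"
    using zero by (simp_all add: example_arcs_def example_point_def)
  have tight_path: "sum y (set (path_arcs p)) = 1"
    if "odd_st_path example_arcs 0 6 p" "sum example_point (set (path_arcs p)) = 1" for p
    using tight that by blast
  have "y (0,1) + (y (1,2) + (y (2,3) + (y (3,4) + y (4,6)))) = 1"
    "y (0,1) + (y (1,2) + (y (2,4) + (y (4,5) + y (5,6)))) = 1"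
    "y (0,2) + (y (2,3) + y (3,6)) = 1"
    "y (0,2) + (y (2,4) + y (4,6)) = 1"
    "y (0,2) + (y (2,5) + y (5,6)) = 1"
    using tight_path[OF example_tight_paths(1)] tight_path[OF example_tight_paths(2)]
      tight_path[OF example_tight_paths(3)] tight_path[OF example_tight_paths(4)]
      tight_path[OF example_tight_paths(5)]
    by (simp_all add: example_point_def)
  with zeros have nonzeros: "y (0,2) = 1/3" "y (2,4) = 1/3" "y (4,6) = 1/3" "y (2,3) = 2/3"
      "y (5,6) = 2/3"
    by linarith+
  have outside: "y e = 0" if "e \<notin> example_arcs" for e
    using y that unfolding odd_cover_dir_def by blast
  show "y = example_point"
  proof
    fix e
    show "y e = example_point e"
      using zeros nonzeros outside[of e]
      by (cases "e \<in> example_arcs") (auto simp: example_arcs_def example_point_def)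
  qed
qed

theorem theorem3:
  shows "\<exists>(V :: nat set) (E :: (nat \<times> nat) set) s t x.
           acyclic_digraph V E \<and> s \<in> V \<and> t \<in> V \<and> s \<noteq> t \<and>
           extreme_pt x (odd_cover_dir E s t) \<and>
           (\<exists>e\<in>E. \<not> half_integral_val (x e))"
proof -
  have "acyclic_digraph {0..6} example_arcs"
    by (rule acyclic_digraph_if_arcs_increasing) (auto simp: example_arcs_def)
  moreover have "(0, 2) \<in> example_arcs" "\<not> half_integral_val (example_point (0, 2))"
    using not_half_integral_one_third by (simp_all add: example_arcs_def example_point_def)
  ultimately show ?thesis
    using extreme_pt_example_point
    by (intro exI[of _ "{0..6}"] exI[of _ example_arcs] exI[of _ "0::nat"] exI[of _ "6::nat"]
        exI[of _ example_point]) auto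
qed

end
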